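(* Let $\lambda_{\max}>1$ and let $F:[0,\lambda_{\max}]\to\mathbb{R}_+$ be continuously differentiable with $F(0)=0$, such that $F(x)<F^\star$ for all $x\in[0,1)$, $F'(1)>0$, $F''$ exists and is continuous on $(0,\lambda_{\max})$ with $F''(1)<0$, and $F$ is strongly concave. Then there exist $c>0$ and $\varepsilon_0>0$ (depending on $F$) such that for all $\varepsilon\in(0,\varepsilon_0]$, $$q^\star_{TA}(\varepsilon):=\inf\{\mathbb{E}_\pi[\bar q]:\lambda\in\Lambda_2,\ R(\lambda)\le\varepsilon\}\;\ge\; c\sqrt{\frac{\log(1/\varepsilon)}{\varepsilon}}.$$
   Context: For a policy $\lambda:\mathbb{Z}_+\to[0,\lambda_{\max}]$, consider the continuous-time birth–death chain on $\mathbb{Z}_+$ with rate $\lambda(q)$ from $q$ to $q+1$ and rate $1$ from $q$ to $q-1$ ($q\ge1$); when positive recurrent on the states reachable from $0$, $\pi$ is its stationary distribution and $\bar q\sim\pi$. $\Lambda_2$ is the class of two-arrival policies: $\lambda(q)=1+k_1$ for $0\le q<\tau$ and $\lambda(q)=1-k_2$ for $q\ge\tau$, with $\tau\in\mathbb{Z}_+$, $k_1\in(0,\lambda_{\max}-1]$, $k_2\in(0,1]$. $F^\star=\sup\{\mathbb{E}_\alpha[F(X)]:\alpha$ a probability measure on $[0,\lambda_{\max}]$, $X\sim\alpha$, $\mathbb{E}_\alpha[X]\le1\}$ and $R(\lambda)=F^\star-\mathbb{E}_\pi[F(\lambda(\bar q))]$. $F$ strongly concave means there is $a>0$ with $F(y)\le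 F(x)+F'(x)(y-x)-a(y-x)^2$ for all $x,y\in[0,\lambda_{\max}]$. *)

theory Defs
  imports "HOL-Probability.Probability"
begin

definition two_arrival :: "nat \<Rightarrow> real \<Rightarrow> real \<Rightarrow> nat \<Rightarrow> real" where
  "two_arrival tau k1 k2 q = (if q < tau then 1 + k1 else 1 - k2)"

definition Lambda2 :: "real \<Rightarrow> (nat \<Rightarrow> real) set" where
  "Lambda2 lmax = {two_arrival tau k1 k2 | tau k1 k2.
      0 < k1 \<and> k1 \<le> lmax - 1 \<and> 0 < k2 \<and> k2 \<le> 1}"

text \<open>p is a stationary distribution of the continuous-time birth-death chain on the
  nonnegative integers with birth rate lam q (q to q+1) and death rate 1 (q to q-1, q >= 1):
  a probability distribution satisfying the global balance equations p Q = 0.\<close>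
definition stationary_bd :: "(nat \<Rightarrow> real) \<Rightarrow> (nat \<Rightarrow> real) \<Rightarrow> bool" where
  "stationary_bd lam p \<longleftrightarrow>
     (\<forall>q. 0 \<le> p q) \<and> p sums 1 \<and>
     p 0 * lam 0 = p 1 \<and>
     (\<forall>q\<ge>1. p q * (lam q + 1) = p (q - 1) * lam (q - 1) + p (q + 1))"

definition Fstar :: "real \<Rightarrow> (real \<Rightarrow> real) \<Rightarrow> real" where
  "Fstar lmax F = Sup {integral\<^sup>L \<alpha> F | \<alpha>.
      prob_space \<alpha> \<and> sets \<alpha> = sets (restrict_space borel {0..lmax}) \<and>
      space \<alpha> = {0..lmax} \<and> integral\<^sup>L \<alpha> (\<lambda>x. x) \<le> 1}"

definition regret :: "real \<Rightarrow> (real \<Rightarrow> real) \<Rightarrow> (nat \<Rightarrow> real) \<Rightarrow> (nat \<Rightarrow> real) \<Rightarrow> real" where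
  "regret lmax F lam p = Fstar lmax F - (\<Sum>q. p q * F (lam q))"

definition mean_queue :: "(nat \<Rightarrow> real) \<Rightarrow> real" where
  "mean_queue p = (\<Sum>q. real q * p q)"

end

(* Detailed balance makes the stationary law of a two-arrival policy increase geometrically,
   p q = p 0 (1 + k1)^q, up to the threshold tau and decrease beyond it. Strong concavity of F at 1
   and F* >= F 1 bound the regret below by F'(1) p 0 + a k1 (p tau - p 0), so a regret eps forces a
   small idle probability p 0 and a small drift k1. Put R = sqrt (ln (1/eps) / eps). If the peak p tau
   is below 1 / (4 R), the mass is spread over about 1 / p tau >= R states. Otherwise
   p tau / p 0 >= F'(1) / (4 eps R), while ln (p tau / p 0) <= tau k1 with k1 = O(eps R); hence
   tau = Omega(ln (1/eps) / (eps R)) = Omega(R), and the half of the mass above tau / 2 gives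
   E q = Omega(R). *)
theory Submission
  imports Defs "HOL-Real_Asymp.Real_Asymp" begin

lemma stationary_bd_detailed_balance:
  assumes "stationary_bd lam p"
  shows "p (Suc q) = p q * lam q"
proof (induction q)
  case 0
  then show ?case using assms unfolding stationary_bd_def by simp
next
  case (Suc q)
  have "p (Suc q) * (lam (Suc q) + 1) = p q * lam q + p (Suc (Suc q))"
    using assms unfolding stationary_bd_def by (metis Suc_eq_plus1 diff_Suc_1 le_add2)
  with Suc.IH show ?case by (simp add: algebra_simps)
qed

lemma mean_queue_ge_tail:
  assumes nonneg: "\<And>q. 0 \<le> p q" and "p sums 1" and "summable (\<lambda>q. real q * p q)"
  shows "real m * (1 - (\<Sum>q<m. p q)) \<le> mean_queue p"
proof -
  let ?f = "\<lambda>q. real m * p q - (if q \<in> {..<m} then real m * p q else 0)"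
  have f_sums: "?f sums (real m * 1 - (\<Sum>q\<in>{..<m}. real m * p q))"
    by (intro sums_diff sums_mult \<open>p sums 1\<close> sums_If_finite_set) auto
  have "real m * (1 - (\<Sum>q<m. p q)) = suminf ?f"
    using sums_unique[OF f_sums] by (simp add: sum_distrib_left algebra_simps)
  also have "\<dots> \<le> (\<Sum>q. real q * p q)"
  proof (rule suminf_le)
    show "?f q \<le> real q * p q" for q
      using nonneg[of q] by (auto intro: mult_right_mono)
  qed (use f_sums assms(3) in \<open>auto simp: sums_summable\<close>)
  finally show ?thesis by (simp add: mean_queue_def)
qed

lemma Fstar_ge:
  fixes F :: "real \<Rightarrow> real"
  assumes cont: "continuous_on {0..lmax} F" and x: "0 \<le> x" "x \<le> 1" "x \<le> lmax"
  shows "F x \<le> Fstar lmax F"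
proof -
  let ?M = "restrict_space borel {0..lmax}"
  let ?S = "{integral\<^sup>L \<alpha> F | \<alpha>.
      prob_space \<alpha> \<and> sets \<alpha> = sets ?M \<and> space \<alpha> = {0..lmax} \<and> integral\<^sup>L \<alpha> (\<lambda>x. x) \<le> 1}"
  have x_space: "x \<in> space ?M" using x by simp
  have "F \<in> borel_measurable ?M" by (rule borel_measurable_continuous_on_restrict[OF cont])
  moreover have "(\<lambda>x. x) \<in> borel_measurable ?M"
    by (rule borel_measurable_continuous_on_restrict) (intro continuous_intros)
  ultimately have "integral\<^sup>L (return ?M x) F \<in> ?S"
    using x_space x by (auto simp: prob_space_return integral_return intro!: exI[of _ "return ?M x"])
  then have F_x_mem: "F x \<in> ?S"
    using x_space \<open>F \<in> borel_measurable ?M\<close> by (simp add: integral_return)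
  obtain B where B: "\<And>y. y \<in> {0..lmax} \<Longrightarrow> F y \<le> B" and "0 \<le> B"
  proof -
    have "bdd_above (F ` {0..lmax})"
      using compact_continuous_image[OF cont] by (auto intro: bounded_imp_bdd_above compact_imp_bounded)
    then obtain B where "\<forall>y\<in>{0..lmax}. F y \<le> B" by (auto simp: bdd_above_def)
    then show thesis by (intro that[of "max B 0"]) (auto simp: le_max_iff_disj)
  qed
  have "bdd_above ?S"
  proof (rule bdd_aboveI)
    fix r assume "r \<in> ?S"
    then obtain \<alpha> where r: "r = integral\<^sup>L \<alpha> F" and "prob_space \<alpha>" and "space \<alpha> = {0..lmax}"
      by auto
    show "r \<le> B"
    proof (cases "integrable \<alpha> F")
      case True
      then have "integral\<^sup>L \<alpha> F \<le> integral\<^sup>L \<alpha> (\<lambda>_. B)"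
        using \<open>prob_space \<alpha>\<close> \<open>space \<alpha> = {0..lmax}\<close> B
        by (intro integral_mono) (auto intro: finite_measure.integrable_const prob_space.finite_measure)
      also have "\<dots> = B" using \<open>prob_space \<alpha>\<close> by (simp add: prob_space.prob_space)
      finally show ?thesis using r by simp
    next
      case False
      then show ?thesis using r \<open>0 \<le> B\<close> by (simp add: not_integrable_integral_eq)
    qed
  qed
  then show ?thesis unfolding Fstar_def using cSup_upper[OF F_x_mem] by blast
qed

locale two_arrival_stationary =
  fixes tau :: nat and k1 k2 :: real and p :: "nat \<Rightarrow> real"
  assumes k1_pos: "0 < k1" and k2_pos: "0 < k2" and k2_le_1: "k2 \<le> 1"
    and stationary: "stationary_bd (two_arrival tau k1 k2) p"
begin

lemma p_nonneg: "0 \<le> p q"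
  using stationary unfolding stationary_bd_def by blast

lemma p_sums_one: "p sums 1"
  using stationary unfolding stationary_bd_def by blast

lemma p_Suc: "p (Suc q) = p q * two_arrival tau k1 k2 q"
  using stationary by (rule stationary_bd_detailed_balance)

lemma p_geometric: "q \<le> tau \<Longrightarrow> p q = p 0 * (1 + k1) ^ q"
  by (induction q) (auto simp: p_Suc two_arrival_def)

lemma p_0_pos: "0 < p 0"
proof (rule ccontr)
  assume "\<not> 0 < p 0"
  then have "p 0 = 0" using p_nonneg[of 0] by simp
  then have "p q = 0" for q by (induction q) (auto simp: p_Suc)
  then have "p sums 0" by (simp add: sums_0)
  with p_sums_one show False using sums_unique2 by fastforce
qed

lemma p_mono_below_tau: "q \<le> r \<Longrightarrow> r \<le> tau \<Longrightarrow> p q \<le> p r"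
  using p_geometric[of q] p_geometric[of r] p_0_pos k1_pos
  by (auto intro!: mult_left_mono power_increasing)

lemma p_le_p_tau: "p q \<le> p tau"
proof (cases "q \<le> tau")
  case True
  then show ?thesis by (simp add: p_mono_below_tau)
next
  case False
  then have "tau \<le> q" by simp
  then show ?thesis
  proof (induction q rule: dec_induct)
    case (step n)
    then have "p (Suc n) = p n - p n * k2" by (simp add: p_Suc two_arrival_def algebra_simps)
    moreover have "0 \<le> p n * k2" using p_nonneg[of n] k2_pos by simp
    ultimately show ?case using step.IH by linarith
  qed simp_all
qed

lemma p_tau_pos: "0 < p tau"
  using p_0_pos p_le_p_tau[of 0] by linarith

lemma sum_below_tau: "k1 * (\<Sum>q<tau. p q) = p tau - p 0"
proof -
  have "(\<Sum>q<tau. k1 * p q) = (\<Sum>q<tau. p (Suc q) - p q)"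
    by (rule sum.cong) (auto simp: p_Suc two_arrival_def algebra_simps)
  also have "\<dots> = p tau - p 0" by (rule sum_lessThan_telescope)
  finally show ?thesis by (simp add: sum_distrib_left)
qed

lemma ln_p_tau_div_p_0_le: "ln (p tau / p 0) \<le> real tau * k1"
proof -
  have "ln (p tau / p 0) = real tau * ln (1 + k1)"
    using p_geometric[of tau] p_0_pos k1_pos by (simp add: ln_realpow)
  also have "\<dots> \<le> real tau * k1"
    using k1_pos by (intro mult_left_mono ln_add_one_self_le_self) auto
  finally show ?thesis .
qed

lemma summable_mean: "summable (\<lambda>q. real q * p q)"
proof (rule summable_ratio_test[of "1 - k2 / 2" "max tau (nat \<lceil>2 / k2\<rceil>)"])
  show "1 - k2 / 2 < 1" using k2_pos by simp
next
  fix n assume n: "max tau (nat \<lceil>2 / k2\<rceil>) \<le> n"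
  then have "p (Suc n) = (1 - k2) * p n" by (simp add: p_Suc two_arrival_def)
  moreover have "2 \<le> k2 * real n" using n k2_pos by (simp add: field_simps)
  then have "real (Suc n) * (1 - k2) * p n \<le> (1 - k2 / 2) * real n * p n"
    using k2_pos by (intro mult_right_mono p_nonneg) (simp add: algebra_simps)
  ultimately show "norm (real (Suc n) * p (Suc n)) \<le> (1 - k2 / 2) * norm (real n * p n)"
    using p_nonneg[of n] k2_le_1 by (simp add: abs_of_nonneg mult.assoc)
qed

lemma mean_queue_ge_half_tail:
  assumes "(\<Sum>q<m. p q) \<le> 1/2"
  shows "real m / 2 \<le> mean_queue p"
proof -
  have "real m * (1/2) \<le> real m * (1 - (\<Sum>q<m. p q))"
    using assms by (intro mult_left_mono) auto
  also have "\<dots> \<le> mean_queue p"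
    by (rule mean_queue_ge_tail[OF p_nonneg p_sums_one summable_mean])
  finally show ?thesis by simp
qed

lemma mean_queue_ge_inverse_p_tau: "1 / (4 * p tau) - 1/2 \<le> mean_queue p"
proof -
  define t where "t = nat \<lfloor>1 / (2 * p tau)\<rfloor>"
  have t: "real t = of_int \<lfloor>1 / (2 * p tau)\<rfloor>" unfolding t_def using p_tau_pos by (intro of_nat_nat) simp
  have "(\<Sum>q<t. p q) \<le> real t * p tau"
    using sum_mono[of "{..<t}" p "\<lambda>_. p tau"] p_le_p_tau by auto
  also have "\<dots> \<le> 1/2"
  proof -
    have "real t \<le> 1 / (2 * p tau)" using t by linarith
    with p_tau_pos show ?thesis by (simp add: field_simps)
  qed
  finally have "real t / 2 \<le> mean_queue p" by (rule mean_queue_ge_half_tail)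
  moreover have "1 / (2 * p tau) - 1 \<le> real t" using t by linarith
  ultimately show ?thesis by (simp add: field_simps)
qed

(* Below tau the mass increases, so the first half of {..<tau} carries at most the mass of the
   second half. *)
lemma mean_queue_ge_tau: "(real tau - 1) / 4 \<le> mean_queue p"
proof -
  let ?m = "tau div 2"
  have "(\<Sum>q<?m. p q) \<le> (\<Sum>q<?m. p (q + ?m))"
    by (intro sum_mono p_mono_below_tau) auto
  also have "\<dots> = (\<Sum>q\<in>{?m..<2*?m}. p q)"
    by (rule sum.reindex_bij_witness[of _ "\<lambda>q. q - ?m" "\<lambda>q. q + ?m"]) auto
  finally have "2 * (\<Sum>q<?m. p q) \<le> (\<Sum>q<2*?m. p q)"
    by (simp add: sum.atLeastLessThan_concat[of 0 ?m "2*?m", symmetric] lessThan_atLeast0)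
  also have "\<dots> \<le> 1"
    using sum_le_suminf[OF sums_summable[OF p_sums_one], of "{..<2*?m}"] p_nonneg
      sums_unique[OF p_sums_one] by auto
  finally have "real ?m / 2 \<le> mean_queue p" by (intro mean_queue_ge_half_tail) simp
  moreover have "real tau \<le> 2 * real ?m + 1" by linarith
  ultimately show ?thesis by simp
qed

lemma summable_p_mult: "summable (\<lambda>q. p q * f (two_arrival tau k1 k2 q))"
proof (rule summable_comparison_test)
  show "\<exists>N. \<forall>q\<ge>N. norm (p q * f (two_arrival tau k1 k2 q)) \<le> p q * (\<bar>f (1 + k1)\<bar> + \<bar>f (1 - k2)\<bar>)"
    using p_nonneg by (auto simp: two_arrival_def abs_mult intro!: mult_left_mono)
  show "summable (\<lambda>q. p q * (\<bar>f (1 + k1)\<bar> + \<bar>f (1 - k2)\<bar>))"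
    using p_sums_one by (intro summable_mult2 sums_summable)
qed

lemma sum_sq_deviation_ge: "k1 * (p tau - p 0) \<le> (\<Sum>q. p q * (two_arrival tau k1 k2 q - 1)\<^sup>2)"
proof -
  have "k1 * (p tau - p 0) = (\<Sum>q<tau. p q * (two_arrival tau k1 k2 q - 1)\<^sup>2)"
    by (simp add: sum_below_tau[symmetric] sum_distrib_left two_arrival_def power2_eq_square mult_ac)
  also have "\<dots> \<le> (\<Sum>q. p q * (two_arrival tau k1 k2 q - 1)\<^sup>2)"
    using p_nonneg by (intro sum_le_suminf summable_p_mult) auto
  finally show ?thesis .
qed

(* Averaging the quadratic upper bound of F at 1, the linear term telescopes to - p 0 since
   p q * (lam q - 1) = p (q + 1) - p q. *)
lemma regret_ge:
  fixes F :: "real \<Rightarrow> real"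
  assumes quad: "\<And>y. y \<in> {0..lmax} \<Longrightarrow> F y \<le> F 1 + d * (y - 1) - A * (y - 1)\<^sup>2"
    and "1 + k1 \<le> lmax" and "0 \<le> A" and "F 1 \<le> Fstar lmax F"
  shows "d * p 0 + A * k1 * (p tau - p 0) \<le> regret lmax F (two_arrival tau k1 k2) p"
proof -
  let ?lam = "two_arrival tau k1 k2"
  let ?v = "\<lambda>q. p q * (?lam q - 1)\<^sup>2"
  have bound: "p q * F (?lam q) \<le> F 1 * p q + d * (p (Suc q) - p q) - A * ?v q" for q
  proof -
    have "?lam q \<in> {0..lmax}" using k1_pos k2_pos k2_le_1 \<open>1 + k1 \<le> lmax\<close> by (auto simp: two_arrival_def)
    then have "p q * F (?lam q) \<le> p q * (F 1 + d * (?lam q - 1) - A * (?lam q - 1)\<^sup>2)"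
      using quad p_nonneg by (intro mult_left_mono)
    also have "\<dots> = F 1 * p q + d * (p (Suc q) - p q) - A * ?v q"
      by (simp add: p_Suc algebra_simps)
    finally show ?thesis .
  qed
  have "(\<lambda>q. p (Suc q)) sums (1 - p 0)" using p_sums_one by (simp add: sums_Suc_iff)
  then have "(\<lambda>q. F 1 * p q + d * (p (Suc q) - p q) - A * ?v q) sums
      (F 1 * 1 + d * ((1 - p 0) - 1) - A * (\<Sum>q. ?v q))"
    by (intro sums_diff sums_add sums_mult p_sums_one summable_sums summable_p_mult)
  then have "(\<Sum>q. p q * F (?lam q)) \<le> F 1 - d * p 0 - A * (\<Sum>q. ?v q)"
    using suminf_le[OF bound summable_p_mult[of F]] by (simp add: sums_iff)
  also have "\<dots> \<le> F 1 - d * p 0 - A * (k1 * (p tau - p 0))"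
    using sum_sq_deviation_ge \<open>0 \<le> A\<close> by (simp add: mult_left_mono)
  finally show ?thesis using \<open>F 1 \<le> Fstar lmax F\<close> unfolding regret_def by (simp add: mult.assoc)
qed

(* The growth p tau / p 0 >= d / (4 eps R) has to be achieved at the rate
   ln (1 + k1) <= k1 <= 8 eps R / A per step. *)
lemma tau_ge_scale:
  assumes "0 < A" "0 < d" and regret: "d * p 0 + A * k1 * (p tau - p 0) \<le> \<epsilon>"
    and R: "0 < R" "8 * \<epsilon> * R \<le> d" "\<epsilon> * R\<^sup>2 \<le> 4 * ln (d / (4 * \<epsilon> * R))"
    and peak: "1 / (4 * R) < p tau"
  shows "A * R / 32 \<le> real tau"
proof -
  have "0 \<le> A * k1 * (p tau - p 0)" using \<open>0 < A\<close> k1_pos p_le_p_tau[of 0] by simp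
  then have "d * p 0 \<le> \<epsilon>" using regret by linarith
  then have p_0_le: "p 0 \<le> \<epsilon> / d" using \<open>0 < d\<close> by (simp add: field_simps)
  have "0 < \<epsilon>" using \<open>d * p 0 \<le> \<epsilon>\<close> p_0_pos \<open>0 < d\<close> by (smt (verit) mult_pos_pos)
  have "\<epsilon> / d \<le> 1 / (8 * R)" using R \<open>0 < d\<close> by (simp add: field_simps)
  then have "1 / (8 * R) \<le> p tau - p 0" using p_0_le peak by (simp add: field_simps)
  then have "A * k1 * (1 / (8 * R)) \<le> \<epsilon>"
    using regret \<open>0 < A\<close> k1_pos p_0_pos \<open>0 < d\<close> by (smt (verit) mult_left_mono mult_pos_pos)
  then have k1_le: "k1 \<le> 8 * \<epsilon> * R / A"
    using \<open>0 < A\<close> R by (simp add: field_simps)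
  have "d / (4 * \<epsilon> * R) \<le> p tau / p 0"
    using frac_le[of "p tau" "1 / (4 * R)" "p 0" "\<epsilon> / d"] peak p_0_le p_0_pos p_tau_pos \<open>0 < d\<close> R
    by (simp add: field_simps)
  then have "ln (d / (4 * \<epsilon> * R)) \<le> ln (p tau / p 0)"
    using R \<open>0 < d\<close> \<open>0 < \<epsilon>\<close> p_0_pos p_tau_pos by (subst ln_le_cancel_iff) auto
  then have "\<epsilon> * R\<^sup>2 / 4 \<le> real tau * k1" using R ln_p_tau_div_p_0_le by linarith
  also have "\<dots> \<le> real tau * (8 * \<epsilon> * R / A)" using k1_le by (rule mult_left_mono) simp
  finally have "(A * R) * (\<epsilon> * R) \<le> (32 * real tau) * (\<epsilon> * R)"
    using \<open>0 < A\<close> by (simp add: field_simps power2_eq_square)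
  then show ?thesis using \<open>0 < \<epsilon>\<close> R by (simp add: mult_le_cancel_right)
qed

lemma mean_queue_ge_scale:
  assumes "0 < A" "0 < d" and regret: "d * p 0 + A * k1 * (p tau - p 0) \<le> \<epsilon>"
    and R: "1 \<le> R" "64 \<le> A * R" "8 * \<epsilon> * R \<le> d" "\<epsilon> * R\<^sup>2 \<le> 4 * ln (d / (4 * \<epsilon> * R))"
  shows "min (1/2) (A / 256) * R \<le> mean_queue p"
proof (cases "p tau \<le> 1 / (4 * R)")
  case True
  with R p_tau_pos have "R \<le> 1 / (4 * p tau)" by (simp add: field_simps)
  then have "R / 2 \<le> mean_queue p" using mean_queue_ge_inverse_p_tau R by linarith
  moreover have "min (1/2) (A / 256) * R \<le> R / 2" using R by (simp add: mult_right_mono)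
  ultimately show ?thesis by linarith
next
  case False
  then have "A * R / 32 \<le> real tau" using tau_ge_scale assms by simp
  then have "A * R / 256 \<le> mean_queue p" using mean_queue_ge_tau R(2) by argo
  moreover have "min (1/2) (A / 256) * R \<le> A * R / 256" using R by (simp add: mult_right_mono)
  ultimately show ?thesis by linarith
qed

end

lemma eventually_queue_scale_conditions:
  fixes A d :: real
  assumes "0 < A" "0 < d"
  defines "R \<equiv> \<lambda>\<epsilon>. sqrt (ln (1 / \<epsilon>) / \<epsilon>)"
  shows "\<forall>\<^sub>F \<epsilon> in at_right 0. 1 \<le> R \<epsilon> \<and> 64 \<le> A * R \<epsilon> \<and> 8 * \<epsilon> * R \<epsilon> \<le> d \<and>
           \<epsilon> * (R \<epsilon>)\<^sup>2 \<le> 4 * ln (d / (4 * \<epsilon> * R \<epsilon>))"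
proof -
  have R_lim: "filterlim R at_top (at_right 0)"
    unfolding R_def by real_asymp
  have "((\<lambda>\<epsilon>. \<epsilon> * R \<epsilon>) \<longlongrightarrow> 0) (at_right 0)"
    unfolding R_def by real_asymp
  then have "\<forall>\<^sub>F \<epsilon> in at_right 0. \<epsilon> * R \<epsilon> < d / 8"
    using \<open>0 < d\<close> by (intro order_tendstoD(2)) auto
  then have small: "\<forall>\<^sub>F \<epsilon> in at_right 0. 8 * \<epsilon> * R \<epsilon> \<le> d"
    by eventually_elim (simp add: mult.assoc)
  have "filterlim (\<lambda>\<epsilon>. 4 * ln (1 / (4 * \<epsilon> * R \<epsilon>)) - \<epsilon> * (R \<epsilon>)\<^sup>2) at_top (at_right 0)"
    unfolding R_def by real_asymp
  then have log_gap: "\<forall>\<^sub>F \<epsilon> in at_right 0. - 4 * ln d \<le> 4 * ln (1 / (4 * \<epsilon> * R \<epsilon>)) - \<epsilon> * (R \<epsilon>)\<^sup>2"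
    by (simp add: filterlim_at_top)
  have pos: "\<forall>\<^sub>F \<epsilon> in at_right (0::real). 0 < \<epsilon>"
    by (simp add: eventually_at_right_less)
  show ?thesis
    using filterlim_at_top[THEN iffD1, OF R_lim, rule_format, of 1]
      filterlim_at_top[THEN iffD1, OF R_lim, rule_format, of "64 / A"] small log_gap pos
  proof eventually_elim
    case (elim \<epsilon>)
    then have "ln (d / (4 * \<epsilon> * R \<epsilon>)) = ln d + ln (1 / (4 * \<epsilon> * R \<epsilon>))"
      using \<open>0 < d\<close> by (subst ln_mult_pos[symmetric]) auto
    with elim show ?case using \<open>0 < A\<close> by (simp add: field_simps)
  qed
qed

theorem theorem6p2:
  fixes lmax :: real and F F' F'' :: "real \<Rightarrow> real"
  assumes lmax: "lmax > 1"
    and Fnonneg: "\<forall>x\<in>{0..lmax}. F x \<ge> 0"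
    and F'_deriv: "\<forall>x\<in>{0..lmax}. (F has_real_derivative F' x) (at x within {0..lmax})"
    and F'_cont: "continuous_on {0..lmax} F'"
    and F0: "F 0 = 0"
    and below: "\<forall>x\<in>{0..<1}. F x < Fstar lmax F"
    and F'1: "F' 1 > 0"
    and F''_deriv: "\<forall>x\<in>{0<..<lmax}. (F' has_real_derivative F'' x) (at x)"
    and F''_cont: "continuous_on {0<..<lmax} F''"
    and F''1: "F'' 1 < 0"
    and strong_concave: "\<exists>a>0. \<forall>x\<in>{0..lmax}. \<forall>y\<in>{0..lmax}.
                            F y \<le> F x + F' x * (y - x) - a * (y - x)\<^sup>2"
  shows "\<exists>c>0. \<exists>\<epsilon>0>0. \<forall>\<epsilon>. 0 < \<epsilon> \<and> \<epsilon> \<le> \<epsilon>0 \<longrightarrow>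
           (\<forall>lam\<in>Lambda2 lmax. \<forall>p. stationary_bd lam p \<and> regret lmax F lam p \<le> \<epsilon> \<longrightarrow>
              mean_queue p \<ge> c * sqrt (ln (1 / \<epsilon>) / \<epsilon>))"
proof -
  obtain A where "0 < A" and concave: "\<forall>x\<in>{0..lmax}. \<forall>y\<in>{0..lmax}.
      F y \<le> F x + F' x * (y - x) - A * (y - x)\<^sup>2"
    using strong_concave by blast
  have quad: "F y \<le> F 1 + F' 1 * (y - 1) - A * (y - 1)\<^sup>2" if "y \<in> {0..lmax}" for y
    using concave that lmax by simp
  have "continuous_on {0..lmax} F"
    using F'_deriv by (auto simp: continuous_on_eq_continuous_within intro: DERIV_continuous)
  then have F_1_le: "F 1 \<le> Fstar lmax F" using lmax by (intro Fstar_ge) auto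
  define R :: "real \<Rightarrow> real" where "R \<epsilon> = sqrt (ln (1 / \<epsilon>) / \<epsilon>)" for \<epsilon>
  obtain \<epsilon>0 where "0 < \<epsilon>0" and scale: "\<And>\<epsilon>. 0 < \<epsilon> \<Longrightarrow> \<epsilon> < \<epsilon>0 \<Longrightarrow>
      1 \<le> R \<epsilon> \<and> 64 \<le> A * R \<epsilon> \<and> 8 * \<epsilon> * R \<epsilon> \<le> F' 1 \<and> \<epsilon> * (R \<epsilon>)\<^sup>2 \<le> 4 * ln (F' 1 / (4 * \<epsilon> * R \<epsilon>))"
    using eventually_queue_scale_conditions[OF \<open>0 < A\<close> F'1, folded R_def]
    unfolding eventually_at_right_field by auto
  have "min (1/2) (A / 256) * R \<epsilon> \<le> mean_queue p"
    if \<epsilon>: "0 < \<epsilon>" "\<epsilon> \<le> \<epsilon>0 / 2" and "lam \<in> Lambda2 lmax"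
      and "stationary_bd lam p" and "regret lmax F lam p \<le> \<epsilon>" for \<epsilon> lam p
  proof -
    obtain tau k1 k2 where lam: "lam = two_arrival tau k1 k2"
      and k: "0 < k1" "k1 \<le> lmax - 1" "0 < k2" "k2 \<le> 1"
      using \<open>lam \<in> Lambda2 lmax\<close> unfolding Lambda2_def by auto
    interpret two_arrival_stationary tau k1 k2 p
      using k \<open>stationary_bd lam p\<close> lam by unfold_locales auto
    have "F' 1 * p 0 + A * k1 * (p tau - p 0) \<le> \<epsilon>"
      using regret_ge[OF quad _ _ F_1_le] k \<open>0 < A\<close> \<open>regret lmax F lam p \<le> \<epsilon>\<close> lam by force
    then show ?thesis
      using mean_queue_ge_scale \<open>0 < A\<close> F'1 scale[of \<epsilon>] \<epsilon> \<open>0 < \<epsilon>0\<close> by simp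
  qed
  moreover have "0 < min (1/2) (A / 256)" using \<open>0 < A\<close> by simp
  ultimately show ?thesis using \<open>0 < \<epsilon>0\<close> unfolding R_def
    by (intro exI[of _ "min (1/2) (A / 256)"] conjI exI[of _ "\<epsilon>0 / 2"]) auto
qed

end
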